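(* Let $S=\{2N+\frac{2k+1}{3^n} : N,k\in\mathbb{Z},\ n\in\mathbb{N},\ |2k+1|<3^n\}$. Let $G$ be the graph with vertex set $\mathbb{R}$ in which two vertices $a,b\in\mathbb{R}$ are adjacent if and only if $|a-b|\in S$. Then $G$ contains no cycle of odd length; that is, $G$ is bipartite.
   Context: $\mathbb{N}=\{1,2,3,\dots\}$. A cycle of length $m$ in $G$ is a sequence of $m$ distinct vertices $v_1,\dots,v_m$ with $v_i$ adjacent to $v_{i+1}$ for $1\le i<m$ and $v_m$ adjacent to $v_1$. *)

theory Defs
  imports Main Complex_Main
begin

definition S_set :: "real set" where
  "S_set = {2 * of_int N + of_int (2*k+1) / 3 ^ n | N k n.
              n \<ge> 1 \<and> \<bar>2*k+1\<bar> < (3::int) ^ n}"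

definition adj :: "real \<Rightarrow> real \<Rightarrow> bool" where
  "adj a b \<longleftrightarrow> \<bar>a - b\<bar> \<in> S_set"

definition is_cycle :: "(real \<Rightarrow> real \<Rightarrow> bool) \<Rightarrow> nat \<Rightarrow> (nat \<Rightarrow> real) \<Rightarrow> bool" where
  "is_cycle E m v \<longleftrightarrow> m \<ge> 1 \<and> inj_on v {..<m} \<and>
     (\<forall>i. i + 1 < m \<longrightarrow> E (v i) (v (i+1))) \<and> E (v (m-1)) (v 0)"

end

theory Submission
  imports Defs
begin

text \<open>The triadic rationals \<open>p / 3\<^sup>n\<close> form an additive subgroup of the reals, and since \<open>3\<close>
  is odd the parity of the numerator \<open>p\<close> is well defined and additive on it. Every element
  of \<open>S\<close> is triadic with odd numerator. Colouring each real by the parity of its difference to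
  a fixed representative of its coset modulo the triadic rationals, adjacent reals therefore
  get different colours, so the graph has no odd cycle.\<close>

lemma two_colouring_no_odd_cycle:
  fixes E :: "real \<Rightarrow> real \<Rightarrow> bool" and c :: "real \<Rightarrow> bool"
  assumes proper: "\<And>a b. E a b \<Longrightarrow> c a \<noteq> c b" and "odd m"
  shows "\<not> is_cycle E m v"
proof
  assume cycle: "is_cycle E m v"
  have colour_along: "c (v i) \<longleftrightarrow> (c (v 0) \<noteq> odd i)" if "i < m" for i
    using that
  proof (induction i)
    case (Suc i)
    with cycle have "E (v i) (v (Suc i))" unfolding is_cycle_def by auto
    with Suc show ?case using proper by auto
  qed simp
  from cycle have "m \<ge> 1" "E (v (m - 1)) (v 0)" unfolding is_cycle_def by auto
  with colour_along[of "m - 1"] proper \<open>odd m\<close> show False by auto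
qed

definition triadic :: "real set" where
  "triadic = {of_int p / 3 ^ n | p n. True}"

definition odd_triadic :: "real set" where
  "odd_triadic = {of_int p / 3 ^ n | p n. odd p}"

lemma triadic_diff_eq:
  "(of_int p / 3 ^ i :: real) - of_int q / 3 ^ n = of_int (p * 3 ^ n - q * 3 ^ i) / 3 ^ (i + n)"
  by (simp add: field_simps power_add)

lemma zero_triadic: "0 \<in> triadic"
  unfolding triadic_def by (auto intro!: exI[of _ 0])

lemma triadic_diff: "x \<in> triadic \<Longrightarrow> y \<in> triadic \<Longrightarrow> x - y \<in> triadic"
proof -
  assume "x \<in> triadic" "y \<in> triadic"
  then obtain p i q n where "x = of_int p / 3 ^ i" "y = of_int q / 3 ^ n"
    unfolding triadic_def by auto
  then show "x - y \<in> triadic"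
    unfolding triadic_def by (auto simp only: triadic_diff_eq)
qed

lemma odd_triadic_iff:
  assumes "x = of_int p / 3 ^ n"
  shows "x \<in> odd_triadic \<longleftrightarrow> odd p"
proof
  assume "x \<in> odd_triadic"
  then obtain q m where q: "x = of_int q / 3 ^ m" "odd q" unfolding odd_triadic_def by auto
  have "(of_int p :: real) * 3 ^ m = of_int q * 3 ^ n"
    using assms q by (simp add: field_simps)
  then have "p * 3 ^ m = q * 3 ^ n"
    by (metis of_int_eq_iff of_int_mult of_int_numeral of_int_power)
  moreover have "odd (q * 3 ^ n)"
    using \<open>odd q\<close> by simp
  ultimately have "odd (p * 3 ^ m)"
    by simp
  then show "odd p"
    by simp
qed (use assms in \<open>auto simp: odd_triadic_def\<close>)

lemma diff_odd_triadic_iff: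
  assumes "x \<in> triadic" "y \<in> odd_triadic"
  shows "x - y \<in> odd_triadic \<longleftrightarrow> x \<notin> odd_triadic"
proof -
  obtain p i q n where x: "x = of_int p / 3 ^ i" and y: "y = of_int q / 3 ^ n" "odd q"
    using assms unfolding triadic_def odd_triadic_def by auto
  have "x - y \<in> odd_triadic \<longleftrightarrow> odd (p * 3 ^ n - q * 3 ^ i)"
    using odd_triadic_iff triadic_diff_eq x y(1) by metis
  also have "\<dots> \<longleftrightarrow> \<not> odd p"
    using \<open>odd q\<close> by simp
  finally show ?thesis
    using odd_triadic_iff[OF x] by simp
qed

lemma odd_triadic_subset_triadic: "odd_triadic \<subseteq> triadic"
  unfolding odd_triadic_def triadic_def by auto

lemma uminus_odd_triadic: "y \<in> odd_triadic \<Longrightarrow> - y \<in> odd_triadic"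
proof -
  assume "y \<in> odd_triadic"
  then obtain p n where "y = of_int p / 3 ^ n" "odd p"
    unfolding odd_triadic_def by auto
  then have "- y = of_int (- p) / 3 ^ n" "odd (- p)"
    by simp_all
  then show "- y \<in> odd_triadic"
    unfolding odd_triadic_def by blast
qed

lemma S_set_subset_odd_triadic: "S_set \<subseteq> odd_triadic"
proof
  fix s assume "s \<in> S_set"
  then obtain N k n where "s = 2 * of_int N + of_int (2 * k + 1) / 3 ^ n"
    unfolding S_set_def by auto
  then have "s = of_int (2 * N * 3 ^ n + 2 * k + 1) / 3 ^ n"
    by (simp add: field_simps)
  from odd_triadic_iff[OF this] show "s \<in> odd_triadic"
    by simp
qed

definition triadic_rep :: "real \<Rightarrow> real" where
  "triadic_rep x = (SOME z. x - z \<in> triadic)"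

lemma diff_triadic_rep: "x - triadic_rep x \<in> triadic"
  unfolding triadic_rep_def by (rule someI[of _ x]) (simp add: zero_triadic)

lemma triadic_rep_eq:
  assumes "a - b \<in> triadic"
  shows "triadic_rep a = triadic_rep b"
proof -
  have "b - a \<in> triadic"
    using triadic_diff[OF zero_triadic assms] by simp
  have "a - z \<in> triadic \<longleftrightarrow> b - z \<in> triadic" for z
    using triadic_diff[OF _ assms, of "a - z"] triadic_diff[OF _ \<open>b - a \<in> triadic\<close>, of "b - z"]
    by auto
  then show ?thesis
    unfolding triadic_rep_def by simp
qed

definition triadic_colour :: "real \<Rightarrow> bool" where
  "triadic_colour x \<longleftrightarrow> x - triadic_rep x \<in> odd_triadic"

lemma triadic_colour_flip:
  assumes "a - b \<in> odd_triadic"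
  shows "triadic_colour a \<noteq> triadic_colour b"
proof -
  have "triadic_rep b = triadic_rep a"
    using triadic_rep_eq assms odd_triadic_subset_triadic by (metis subsetD)
  then have "triadic_colour b \<longleftrightarrow> (a - triadic_rep a) - (a - b) \<in> odd_triadic"
    unfolding triadic_colour_def by simp
  then show ?thesis
    unfolding triadic_colour_def
    using diff_odd_triadic_iff[OF diff_triadic_rep[of a] assms] by simp
qed

lemma adj_triadic_colour:
  assumes "adj a b"
  shows "triadic_colour a \<noteq> triadic_colour b"
proof -
  have "\<bar>a - b\<bar> \<in> odd_triadic"
    using assms S_set_subset_odd_triadic unfolding adj_def by blast
  then have "a - b \<in> odd_triadic"
    using uminus_odd_triadic[of "\<bar>a - b\<bar>"] by (cases "a - b \<ge> 0") auto
  then show ?thesis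
    by (rule triadic_colour_flip)
qed

theorem mainTheorem2:
  fixes m :: nat and v :: "nat \<Rightarrow> real"
  assumes "odd m"
  shows "\<not> is_cycle adj m v"
  using two_colouring_no_odd_cycle[OF adj_triadic_colour assms] .

end
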